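(* Fix $\lambda_1,\lambda_2,\lambda_3\in\mathbb{Z}_{\ge0}$. Let $\mathbf{w}=[w_1,w_2,\dots]$ be an infinite reduced sequence and $\{k_j\}_{j\ge1}$ its ratio number sequence. Then: (1) if each of $1,2,3$ appears infinitely many times in $\mathbf{w}$, then $\lim_{j\to\infty}k_j=3+\lambda_1+\lambda_2+\lambda_3$; (2) if some index $i\in\{1,2,3\}$ appears only finitely many times in $\mathbf{w}$, then there exists a real number $k_\beta$ with $\lim_{j\to\infty}k_j=k_\beta$.
   Context: Generalized Markov mutations (for the equation $X_1^2+X_2^2+X_3^2+\lambda_3X_1X_2+\lambda_1X_2X_3+\lambda_2X_3X_1=(3+\lambda_1+\lambda_2+\lambda_3)X_1X_2X_3$) are the maps on positive rational triples $\mu_1(x_1,x_2,x_3)=(\frac{x_2^2+\lambda_1x_2x_3+x_3^2}{x_1},x_2,x_3)$, $\mu_2(x_1,x_2,x_3)=(x_1,\frac{x_1^2+\lambda_2x_1x_3+x_3^2}{x_2},x_3)$, $\mu_3(x_1,x_2,x_3)=(x_1,x_2,\frac{x_1^2+\lambda_3x_1x_2+x_2^2}{x_3})$. A sequence $\mathbf{w}=[w_1,w_2,\dots]$ with entries in $\{1,2,3\}$ is reduced if $w_i\ne w_{i+1}$ for all $i$. Ratio number sequence: set $T_0=(1,1,1)$ and $T_j=\mu_{w_j}(T_{j-1})$ for $j\ge1$; $k_j$ is the $w_j$-th component of $T_j$ divided by the product of the other two components of $T_j$. *)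

theory Defs
  imports "HOL-Analysis.Analysis"
begin

type_synonym triple = "real \<times> real \<times> real"

fun gmut :: "nat \<Rightarrow> nat \<Rightarrow> nat \<Rightarrow> nat \<Rightarrow> triple \<Rightarrow> triple" where
  "gmut l1 l2 l3 i (x1, x2, x3) =
     (if i = 1 then ((x2^2 + real l1 * x2 * x3 + x3^2) / x1, x2, x3)
      else if i = 2 then (x1, (x1^2 + real l2 * x1 * x3 + x3^2) / x2, x3)
      else (x1, x2, (x1^2 + real l3 * x1 * x2 + x2^2) / x3))"

text \<open>Sequence w indexed from 1: w j is w_j for j >= 1 (w 0 is ignored).
  T 0 = (1,1,1), T j = mu_{w j} (T (j-1)).\<close>
fun Tseq :: "nat \<Rightarrow> nat \<Rightarrow> nat \<Rightarrow> (nat \<Rightarrow> nat) \<Rightarrow> nat \<Rightarrow> triple" where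
  "Tseq l1 l2 l3 w 0 = (1, 1, 1)"
| "Tseq l1 l2 l3 w (Suc j) = gmut l1 l2 l3 (w (Suc j)) (Tseq l1 l2 l3 w j)"

fun comp_ratio :: "nat \<Rightarrow> triple \<Rightarrow> real" where
  "comp_ratio i (x1, x2, x3) =
     (if i = 1 then x1 / (x2 * x3) else if i = 2 then x2 / (x1 * x3) else x3 / (x1 * x2))"

text \<open>Ratio number k_j (meaningful for j >= 1).\<close>
definition ratio_num :: "nat \<Rightarrow> nat \<Rightarrow> nat \<Rightarrow> (nat \<Rightarrow> nat) \<Rightarrow> nat \<Rightarrow> real" where
  "ratio_num l1 l2 l3 w j = comp_ratio (w j) (Tseq l1 l2 l3 w j)"

definition reduced_seq :: "(nat \<Rightarrow> nat) \<Rightarrow> bool" where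
  "reduced_seq w \<longleftrightarrow> (\<forall>j\<ge>1. w j \<in> {1,2,3}) \<and> (\<forall>j\<ge>1. w j \<noteq> w (Suc j))"

end

theory Submission
  imports Defs
begin

(* Mutation at i replaces x_i by the other root of the Markov equation read as a quadratic in x_i,
   so every T_j is a positive solution. Dividing the equation by x1 x2 x3 gives
     x1/(x2 x3) + x2/(x1 x3) + x3/(x1 x2) + l1/x1 + l2/x2 + l3/x3 = 3 + l1 + l2 + l3,
   so every ratio is at most 3 + l1 + l2 + l3. Along a reduced sequence k_j is nondecreasing,
   hence convergent whatever the recurrence pattern of w. Since k_j >= k_1 >= 2, the coordinate
   mutated at step j is at least twice each of the other two and at least j. The two other ratios
   are therefore bounded by reciprocals of coordinates, and if every index recurs then all
   coordinates tend to infinity and k_j tends to 3 + l1 + l2 + l3. *)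

abbreviation markov_const :: "nat \<Rightarrow> nat \<Rightarrow> nat \<Rightarrow> real" where
  "markov_const l1 l2 l3 \<equiv> 3 + real l1 + real l2 + real l3"

fun component :: "nat \<Rightarrow> triple \<Rightarrow> real" where
  "component i (x1, x2, x3) = (if i = 1 then x1 else if i = 2 then x2 else x3)"

fun positive_triple :: "triple \<Rightarrow> bool" where
  "positive_triple (x1, x2, x3) \<longleftrightarrow> x1 > 0 \<and> x2 > 0 \<and> x3 > 0"

fun markov_eq :: "nat \<Rightarrow> nat \<Rightarrow> nat \<Rightarrow> triple \<Rightarrow> bool" where
  "markov_eq l1 l2 l3 (x1, x2, x3) \<longleftrightarrow>
     x1^2 + x2^2 + x3^2 + real l3 * x1 * x2 + real l1 * x2 * x3 + real l2 * x3 * x1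
       = markov_const l1 l2 l3 * x1 * x2 * x3"

lemma quadratic_other_root:
  fixes x b c :: real
  assumes "x \<noteq> 0" "x^2 + b * x + c = 0"
  shows "(c / x)^2 + b * (c / x) + c = 0"
proof -
  have "x^2 * ((c / x)^2 + b * (c / x) + c) = c * (x^2 + b * x + c)"
    using assms(1) by (simp add: power2_eq_square algebra_simps)
  then show ?thesis using assms by simp
qed

lemma markov_eq_quadratic_in_1:
  "markov_eq l1 l2 l3 (x1, x2, x3) \<longleftrightarrow>
     x1^2 + (real l3 * x2 + real l2 * x3 - markov_const l1 l2 l3 * x2 * x3) * x1
       + (x2^2 + real l1 * x2 * x3 + x3^2) = 0"
  by simp algebra

lemma markov_eq_quadratic_in_2:
  "markov_eq l1 l2 l3 (x1, x2, x3) \<longleftrightarrow>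
     x2^2 + (real l3 * x1 + real l1 * x3 - markov_const l1 l2 l3 * x1 * x3) * x2
       + (x1^2 + real l2 * x1 * x3 + x3^2) = 0"
  by simp algebra

lemma markov_eq_quadratic_in_3:
  "markov_eq l1 l2 l3 (x1, x2, x3) \<longleftrightarrow>
     x3^2 + (real l2 * x1 + real l1 * x2 - markov_const l1 l2 l3 * x1 * x2) * x3
       + (x1^2 + real l3 * x1 * x2 + x2^2) = 0"
  by simp algebra

lemma positive_triple_gmut: "positive_triple t \<Longrightarrow> positive_triple (gmut l1 l2 l3 i t)"
  by (cases t) (auto simp: add_pos_nonneg)

lemma markov_eq_gmut:
  assumes "positive_triple t" "markov_eq l1 l2 l3 t"
  shows "markov_eq l1 l2 l3 (gmut l1 l2 l3 i t)"
proof (cases t)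
  case (fields x1 x2 x3)
  with assms have nz: "x1 \<noteq> 0" "x2 \<noteq> 0" "x3 \<noteq> 0" and eq: "markov_eq l1 l2 l3 (x1, x2, x3)"
    by auto
  consider "i = 1" | "i = 2" | "i \<noteq> 1" "i \<noteq> 2" by blast
  then show ?thesis
  proof cases
    case 1
    from eq have "markov_eq l1 l2 l3 ((x2^2 + real l1 * x2 * x3 + x3^2) / x1, x2, x3)"
      unfolding markov_eq_quadratic_in_1 by (rule quadratic_other_root[OF nz(1)])
    with fields 1 show ?thesis by simp
  next
    case 2
    from eq have "markov_eq l1 l2 l3 (x1, (x1^2 + real l2 * x1 * x3 + x3^2) / x2, x3)"
      unfolding markov_eq_quadratic_in_2 by (rule quadratic_other_root[OF nz(2)])
    with fields 2 show ?thesis by simp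
  next
    case 3
    from eq have "markov_eq l1 l2 l3 (x1, x2, (x1^2 + real l3 * x1 * x2 + x2^2) / x3)"
      unfolding markov_eq_quadratic_in_3 by (rule quadratic_other_root[OF nz(3)])
    with fields 3 show ?thesis by simp
  qed
qed

lemma component_gmut_other:
  "i \<in> {1,2,3} \<Longrightarrow> m \<in> {1,2,3} \<Longrightarrow> m \<noteq> i \<Longrightarrow> component m (gmut l1 l2 l3 i t) = component m t"
  by (cases t) auto

text \<open>If \<open>i\<close> was mutated last and \<open>m\<close> is mutated next, with \<open>l\<close> the third index, the old
  ratio is \<open>x\<^sub>i\<^sup>2 / (x\<^sub>1 x\<^sub>2 x\<^sub>3)\<close> and the new one is
  \<open>(x\<^sub>i\<^sup>2 + \<lambda>\<^sub>m x\<^sub>i x\<^sub>l + x\<^sub>l\<^sup>2) / (x\<^sub>1 x\<^sub>2 x\<^sub>3)\<close>.\<close>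
lemma comp_ratio_le_comp_ratio_gmut:
  assumes "positive_triple t" "i \<in> {1,2,3}" "m \<in> {1,2,3}" "i \<noteq> m"
  shows "comp_ratio i t \<le> comp_ratio m (gmut l1 l2 l3 m t)"
  using assms
  by (cases t) (auto simp: field_simps power2_eq_square
      intro!: add_increasing2 add_nonneg_nonneg mult_nonneg_nonneg)

lemma twice_le_if_ratio_ge_2:
  fixes a b c :: real
  assumes "2 \<le> c / (a * b)" "1 \<le> a" "1 \<le> b"
  shows "2 * a \<le> c \<and> 2 * b \<le> c"
proof -
  have "2 * (a * b) \<le> c" using assms by (simp add: field_simps)
  moreover have "a \<le> a * b" "b \<le> a * b" using assms(2,3) by simp_all
  ultimately show ?thesis by linarith
qed

lemma twice_component_le_if_comp_ratio_ge_2: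
  assumes "positive_triple t" "i \<in> {1,2,3}" "2 \<le> comp_ratio i t"
    and "\<forall>n\<in>{1,2,3}. n \<noteq> i \<longrightarrow> 1 \<le> component n t"
    and "m \<in> {1,2,3}" "m \<noteq> i"
  shows "2 * component m t \<le> component i t"
proof (cases t)
  case (fields x1 x2 x3)
  from assms(2) consider "i = 1" | "i = 2" | "i = 3" by auto
  then show ?thesis
  proof cases
    case 1
    with assms fields twice_le_if_ratio_ge_2[of x1 x2 x3] show ?thesis by auto
  next
    case 2
    with assms fields twice_le_if_ratio_ge_2[of x2 x1 x3] show ?thesis by auto
  next
    case 3
    with assms fields twice_le_if_ratio_ge_2[of x3 x1 x2] show ?thesis by auto
  qed
qed

lemma markov_eq_divided:
  assumes "positive_triple t" "markov_eq l1 l2 l3 t"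
  shows "comp_ratio 1 t + comp_ratio 2 t + comp_ratio 3 t
      + real l1 / component 1 t + real l2 / component 2 t + real l3 / component 3 t
    = markov_const l1 l2 l3"
proof (cases t)
  case (fields x1 x2 x3)
  with assms show ?thesis by (simp add: field_simps power2_eq_square)
qed

lemma comp_ratio_le_markov_const:
  assumes "positive_triple t" "markov_eq l1 l2 l3 t" "i \<in> {1,2,3}"
  shows "comp_ratio i t \<le> markov_const l1 l2 l3"
proof -
  have ratio: "0 \<le> comp_ratio m t" for m
    using assms(1) by (cases t) simp
  have quot: "0 \<le> real l / component m t" for l m
    using assms(1) by (cases t) simp
  from assms(3) show ?thesis
    using markov_eq_divided[OF assms(1,2)] ratio[of 1] ratio[of 2] ratio[of 3]
      quot[of l1 1] quot[of l2 2] quot[of l3 3]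
    by auto
qed

lemma divide_le_inverse_if_le:
  fixes a b c :: real
  assumes "0 < b" "0 < c" "a \<le> c"
  shows "a / (b * c) \<le> 1 / b \<and> a / (c * b) \<le> 1 / b"
  using assms by (simp add: field_simps)

definition ratio_gap_bound :: "nat \<Rightarrow> nat \<Rightarrow> nat \<Rightarrow> triple \<Rightarrow> real" where
  "ratio_gap_bound l1 l2 l3 t =
     (1 + real l1) / component 1 t + (1 + real l2) / component 2 t + (1 + real l3) / component 3 t"

lemma markov_const_le_comp_ratio_add:
  assumes "positive_triple t" "markov_eq l1 l2 l3 t" "i \<in> {1,2,3}"
    and maximal: "\<forall>m\<in>{1,2,3}. component m t \<le> component i t"
  shows "markov_const l1 l2 l3 \<le> comp_ratio i t + ratio_gap_bound l1 l2 l3 t"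
proof (cases t)
  case (fields x1 x2 x3)
  have pos: "0 < x1" "0 < x2" "0 < x3" using assms(1) fields by auto
  have sum: "x1 / (x2 * x3) + x2 / (x1 * x3) + x3 / (x1 * x2)
      + real l1 / x1 + real l2 / x2 + real l3 / x3 = markov_const l1 l2 l3"
    using markov_eq_divided[OF assms(1,2)] fields by simp
  have split: "(1 + real l) / x = 1 / x + real l / x" for l and x :: real
    by (simp add: add_divide_distrib)
  have inv: "0 < 1 / x1" "0 < 1 / x2" "0 < 1 / x3" using pos by simp_all
  from assms(3) consider "i = 1" | "i = 2" | "i = 3" by auto
  then show ?thesis
  proof cases
    case 1
    with maximal fields have "x2 \<le> x1" "x3 \<le> x1" by auto
    with pos divide_le_inverse_if_le[where a = x2 and b = x3 and c = x1]
      divide_le_inverse_if_le[where a = x3 and b = x2 and c = x1]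
    show ?thesis using sum fields 1 by (simp add: ratio_gap_bound_def split) (use inv in linarith)
  next
    case 2
    with maximal fields have "x1 \<le> x2" "x3 \<le> x2" by auto
    with pos divide_le_inverse_if_le[where a = x1 and b = x3 and c = x2]
      divide_le_inverse_if_le[where a = x3 and b = x1 and c = x2]
    show ?thesis using sum fields 2 by (simp add: ratio_gap_bound_def split) (use inv in linarith)
  next
    case 3
    with maximal fields have "x1 \<le> x3" "x2 \<le> x3" by auto
    with pos divide_le_inverse_if_le[where a = x1 and b = x2 and c = x3]
      divide_le_inverse_if_le[where a = x2 and b = x1 and c = x3]
    show ?thesis using sum fields 3 by (simp add: ratio_gap_bound_def split) (use inv in linarith)
  qed
qed

lemma positive_triple_Tseq: "positive_triple (Tseq l1 l2 l3 w n)"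
  by (induction n) (simp_all add: positive_triple_gmut)

lemma markov_eq_Tseq: "markov_eq l1 l2 l3 (Tseq l1 l2 l3 w n)"
  by (induction n) (simp_all add: markov_eq_gmut positive_triple_Tseq)

context
  fixes l1 l2 l3 :: nat and w :: "nat \<Rightarrow> nat"
  assumes reduced: "reduced_seq w"
begin

lemma reduced_seq_in_range: "1 \<le> j \<Longrightarrow> w j \<in> {1,2,3}"
  using reduced unfolding reduced_seq_def by auto

lemma reduced_seq_Suc_neq: "1 \<le> j \<Longrightarrow> w j \<noteq> w (Suc j)"
  using reduced unfolding reduced_seq_def by auto

lemma ratio_num_le_ratio_num_Suc:
  "1 \<le> j \<Longrightarrow> ratio_num l1 l2 l3 w j \<le> ratio_num l1 l2 l3 w (Suc j)"
  unfolding ratio_num_def Tseq.simps(2)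
  by (intro comp_ratio_le_comp_ratio_gmut positive_triple_Tseq reduced_seq_in_range
      reduced_seq_Suc_neq) simp_all

lemma ratio_num_ge_2: "1 \<le> j \<Longrightarrow> 2 \<le> ratio_num l1 l2 l3 w j"
proof (induction j rule: dec_induct)
  case base
  from reduced_seq_in_range[of 1] show ?case by (auto simp: ratio_num_def)
next
  case (step j)
  with ratio_num_le_ratio_num_Suc[of j] show ?case by linarith
qed

lemma component_Tseq_ge_1: "m \<in> {1,2,3} \<Longrightarrow> 1 \<le> component m (Tseq l1 l2 l3 w n)"
proof (induction n arbitrary: m)
  case 0
  then show ?case by auto
next
  case (Suc n)
  let ?i = "w (Suc n)"
  have i: "?i \<in> {1,2,3}" using reduced_seq_in_range[of "Suc n"] by simp
  have others: "\<forall>m'\<in>{1,2,3}. m' \<noteq> ?i \<longrightarrow> 1 \<le> component m' (Tseq l1 l2 l3 w (Suc n))"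
    using Suc.IH component_gmut_other[OF i] by simp
  obtain m' where m': "m' \<in> {1,2,3}" "m' \<noteq> ?i"
    using that[of 1] that[of 2] by fastforce
  have "2 * component m' (Tseq l1 l2 l3 w (Suc n)) \<le> component ?i (Tseq l1 l2 l3 w (Suc n))"
    using ratio_num_ge_2[of "Suc n"] unfolding ratio_num_def
    by (intro twice_component_le_if_comp_ratio_ge_2[OF positive_triple_Tseq i _ others m']) simp
  moreover have "1 \<le> component m' (Tseq l1 l2 l3 w (Suc n))" using others m' by blast
  ultimately show ?case using others Suc.prems by (cases "m = ?i") auto
qed

lemma twice_component_Tseq_le:
  "1 \<le> n \<Longrightarrow> m \<in> {1,2,3} \<Longrightarrow> m \<noteq> w n \<Longrightarrow>
    2 * component m (Tseq l1 l2 l3 w n) \<le> component (w n) (Tseq l1 l2 l3 w n)"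
  using twice_component_le_if_comp_ratio_ge_2[OF positive_triple_Tseq reduced_seq_in_range]
    ratio_num_ge_2 component_Tseq_ge_1
  unfolding ratio_num_def by blast

lemma component_Tseq_ge_index: "1 \<le> n \<Longrightarrow> real n \<le> component (w n) (Tseq l1 l2 l3 w n)"
proof (induction n rule: dec_induct)
  case base
  show ?case using component_Tseq_ge_1 reduced_seq_in_range by simp
next
  case (step n)
  have "w n \<in> {1,2,3}" "w (Suc n) \<in> {1,2,3}" "w n \<noteq> w (Suc n)"
    using step(1) reduced_seq_in_range reduced_seq_Suc_neq by simp_all
  then have "2 * component (w n) (Tseq l1 l2 l3 w n)
      \<le> component (w (Suc n)) (Tseq l1 l2 l3 w (Suc n))"
    using twice_component_Tseq_le[of "Suc n" "w n"] component_gmut_other by simp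
  with step show ?case by simp
qed

lemma component_Tseq_ge_occurrence:
  assumes "1 \<le> j" "j \<le> n" "w j = i"
  shows "real j \<le> component i (Tseq l1 l2 l3 w n)"
  using assms(2)
proof (induction n rule: dec_induct)
  case base
  show ?case using component_Tseq_ge_index[OF assms(1)] assms(3) by simp
next
  case (step n)
  show ?case
  proof (cases "w (Suc n) = i")
    case True
    with component_Tseq_ge_index[of "Suc n"] step(1) show ?thesis by simp
  next
    case False
    have "i \<in> {1,2,3}" "w (Suc n) \<in> {1,2,3}"
      using assms reduced_seq_in_range by auto
    with False step(3) show ?thesis using component_gmut_other by simp
  qed
qed

lemma component_Tseq_tendsto_at_top:
  assumes "infinite {j. j \<ge> 1 \<and> w j = i}"
  shows "filterlim (\<lambda>n. component i (Tseq l1 l2 l3 w n)) at_top sequentially"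
  unfolding filterlim_at_top
proof
  fix Z :: real
  obtain j where j: "nat \<lceil>Z\<rceil> \<le> j" "1 \<le> j" "w j = i"
    using assms unfolding infinite_nat_iff_unbounded_le by blast
  show "eventually (\<lambda>n. Z \<le> component i (Tseq l1 l2 l3 w n)) sequentially"
  proof (rule eventually_sequentiallyI)
    fix n assume "j \<le> n"
    with j have "real j \<le> component i (Tseq l1 l2 l3 w n)"
      by (intro component_Tseq_ge_occurrence)
    moreover have "Z \<le> real j" using j(1) by linarith
    ultimately show "Z \<le> component i (Tseq l1 l2 l3 w n)" by linarith
  qed
qed

lemma ratio_num_le_markov_const: "1 \<le> j \<Longrightarrow> ratio_num l1 l2 l3 w j \<le> markov_const l1 l2 l3"
  unfolding ratio_num_def
  by (intro comp_ratio_le_markov_const positive_triple_Tseq markov_eq_Tseq reduced_seq_in_range)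

lemma markov_const_le_ratio_num_add:
  assumes "1 \<le> j"
  shows "markov_const l1 l2 l3
    \<le> ratio_num l1 l2 l3 w j + ratio_gap_bound l1 l2 l3 (Tseq l1 l2 l3 w j)"
proof -
  have "component m (Tseq l1 l2 l3 w j) \<le> component (w j) (Tseq l1 l2 l3 w j)"
    if "m \<in> {1,2,3}" for m
    using twice_component_Tseq_le[OF assms that] component_Tseq_ge_1[OF that, of j]
    by (cases "m = w j") auto
  then show ?thesis unfolding ratio_num_def
    by (intro markov_const_le_comp_ratio_add positive_triple_Tseq markov_eq_Tseq
        reduced_seq_in_range[OF assms]) blast
qed

lemma ratio_num_convergent: "convergent (ratio_num l1 l2 l3 w)"
proof -
  have "incseq (\<lambda>n. ratio_num l1 l2 l3 w (Suc n))"
    by (rule incseq_SucI) (simp add: ratio_num_le_ratio_num_Suc)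
  moreover have "\<forall>n. ratio_num l1 l2 l3 w (Suc n) \<le> markov_const l1 l2 l3"
    by (simp add: ratio_num_le_markov_const)
  ultimately obtain L where "(\<lambda>n. ratio_num l1 l2 l3 w (Suc n)) \<longlonglongrightarrow> L"
    by (rule incseq_convergent)
  then show ?thesis using convergent_Suc_iff unfolding convergent_def by blast
qed

lemma ratio_num_tendsto_markov_const:
  assumes "\<forall>i\<in>{1,2,3::nat}. infinite {j. j \<ge> 1 \<and> w j = i}"
  shows "ratio_num l1 l2 l3 w \<longlonglongrightarrow> markov_const l1 l2 l3"
proof -
  let ?err = "\<lambda>n. ratio_gap_bound l1 l2 l3 (Tseq l1 l2 l3 w n)"
  have vanish: "(\<lambda>n. (1 + real l) / component i (Tseq l1 l2 l3 w n)) \<longlonglongrightarrow> 0"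
    if "i \<in> {1,2,3}" for i l
  proof -
    have "filterlim (\<lambda>n. component i (Tseq l1 l2 l3 w n)) at_top sequentially"
      using assms that by (intro component_Tseq_tendsto_at_top) blast
    then show ?thesis
      by (intro tendsto_divide_0[OF tendsto_const] filterlim_at_top_imp_at_infinity)
  qed
  have "?err \<longlonglongrightarrow> 0"
    using tendsto_add_zero[OF tendsto_add_zero[OF vanish[of 1 l1] vanish[of 2 l2]] vanish[of 3 l3]]
    unfolding ratio_gap_bound_def by simp
  then have "(\<lambda>n. markov_const l1 l2 l3 - ?err n) \<longlonglongrightarrow> markov_const l1 l2 l3"
    using tendsto_diff[OF tendsto_const] by fastforce
  then show ?thesis
  proof (rule tendsto_sandwich[OF _ _ _ tendsto_const, rotated 2])
    show "eventually (\<lambda>n. markov_const l1 l2 l3 - ?err n \<le> ratio_num l1 l2 l3 w n) sequentially"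
      using markov_const_le_ratio_num_add by (intro eventually_sequentiallyI[of 1]) fastforce
    show "eventually (\<lambda>n. ratio_num l1 l2 l3 w n \<le> markov_const l1 l2 l3) sequentially"
      using ratio_num_le_markov_const by (rule eventually_sequentiallyI)
  qed
qed

end

theorem theorem6p6:
  fixes l1 l2 l3 :: nat and w :: "nat \<Rightarrow> nat"
  assumes "reduced_seq w"
  shows "((\<forall>i\<in>{1,2,3::nat}. infinite {j. j \<ge> 1 \<and> w j = i}) \<longrightarrow>
            (ratio_num l1 l2 l3 w \<longlonglongrightarrow> 3 + real l1 + real l2 + real l3))
       \<and> ((\<exists>i\<in>{1,2,3::nat}. finite {j. j \<ge> 1 \<and> w j = i}) \<longrightarrow>
            (\<exists>k\<beta>::real. ratio_num l1 l2 l3 w \<longlonglongrightarrow> k\<beta>))"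
  using ratio_num_tendsto_markov_const[OF assms] ratio_num_convergent[OF assms]
  unfolding convergent_def by blast

end
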